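(* Let $G=(V,E,\omega)\in\mathcal G$ and let $S$ be a proper subset of $V$. Let $\nu^S$ be the equilibrium measure for $S$, $\kappa_S$ the graph curvature of $S$, and $\kappa_S^+=\max_{i\in V}(\kappa_S)_i$. Then $\nu^S_i\geq(\kappa_S^+)^{-1}$ for all $i\in S$.
   Context: $\mathcal{G}$ is the set of finite, simple, connected, undirected, edge-weighted graphs $G=(V,E,\omega)$ with $V=\{1,\dots,n\}$, $n\geq2$, weights $\omega_{ij}=\omega_{ji}>0$ on edges, $0$ otherwise. $d_i=\sum_j\omega_{ij}$. $\mathcal V$: functions $V\to\mathbb R$. Fixed $r\in[0,1]$; $(\Delta u)_i=d_i^{-r}\sum_j\omega_{ij}(u_i-u_j)$. For a proper subset $S\subsetneq V$, the equilibrium measure $\nu^S$ is the unique $\nu\in\mathcal V$ with $(\Delta\nu)_i=1$ for $i\in S$ and $\nu_i=0$ for $i\in V\setminus S$. Graph curvature (with $q=1$): $(\kappa_S)_i=d_i^{-r}\sum_{j\in V\setminus S}\omega_{ij}$ if $i\in S$, and $(\kappa_S)_i=-d_i^{-r}\sum_{j\in S}\omega_{ij}$ if $i\in V\setminus S$. *)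

theory Defs
  imports Complex_Main
begin

text \<open>A weighted graph on vertex set V = {1..n} is given by n and a weight
function w :: nat => nat => real (weights only matter on V x V).\<close>

definition verts :: "nat \<Rightarrow> nat set" where
  "verts n = {1..n}"

definition in_graph_class :: "nat \<Rightarrow> (nat \<Rightarrow> nat \<Rightarrow> real) \<Rightarrow> bool" where
  "in_graph_class n w \<longleftrightarrow>
     n \<ge> 2 \<and>
     (\<forall>i\<in>verts n. \<forall>j\<in>verts n. w i j = w j i) \<and>
     (\<forall>i\<in>verts n. \<forall>j\<in>verts n. w i j \<ge> 0) \<and>
     (\<forall>i\<in>verts n. w i i = 0) \<and>
     (\<forall>i\<in>verts n. \<forall>j\<in>verts n.
        (\<lambda>a b. a \<in> verts n \<and> b \<in> verts n \<and> w a b > 0)\<^sup>*\<^sup>* i j)"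

definition degree :: "nat \<Rightarrow> (nat \<Rightarrow> nat \<Rightarrow> real) \<Rightarrow> nat \<Rightarrow> real" where
  "degree n w i = (\<Sum>j\<in>verts n. w i j)"

definition graph_laplacian ::
  "nat \<Rightarrow> (nat \<Rightarrow> nat \<Rightarrow> real) \<Rightarrow> real \<Rightarrow> (nat \<Rightarrow> real) \<Rightarrow> nat \<Rightarrow> real" where
  "graph_laplacian n w r u i =
     degree n w i powr (-r) * (\<Sum>j\<in>verts n. w i j * (u i - u j))"

text \<open>Equilibrium measure: values outside V are fixed to 0 so that it is unique.\<close>
definition equilibrium_measure ::
  "nat \<Rightarrow> (nat \<Rightarrow> nat \<Rightarrow> real) \<Rightarrow> real \<Rightarrow> nat set \<Rightarrow> nat \<Rightarrow> real" where
  "equilibrium_measure n w r S =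
     (THE \<nu>. (\<forall>i\<in>S. graph_laplacian n w r \<nu> i = 1) \<and> (\<forall>i. i \<notin> S \<longrightarrow> \<nu> i = 0))"

definition graph_curvature ::
  "nat \<Rightarrow> (nat \<Rightarrow> nat \<Rightarrow> real) \<Rightarrow> real \<Rightarrow> nat set \<Rightarrow> nat \<Rightarrow> real" where
  "graph_curvature n w r S i =
     (if i \<in> S then degree n w i powr (-r) * (\<Sum>j\<in>verts n - S. w i j)
      else - (degree n w i powr (-r) * (\<Sum>j\<in>S. w i j)))"

definition curvature_max ::
  "nat \<Rightarrow> (nat \<Rightarrow> nat \<Rightarrow> real) \<Rightarrow> real \<Rightarrow> nat set \<Rightarrow> real" where
  "curvature_max n w r S = Max (graph_curvature n w r S ` verts n)"

end

theory Submission
  imports Defs "HOL-Library.Function_Algebras"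
begin

text \<open>The equilibrium measure exists and is unique because the Dirichlet Laplacian on S is
injective: a function vanishing off S that is harmonic on S has zero Dirichlet energy, hence is
constant along edges, hence (by connectedness and S \<noteq> V) zero. For the bound, look at a vertex
i \<in> S where \<nu> is minimal on S. All neighbours in S contribute non-positively to
(\<Delta>\<nu>)(i), and neighbours j outside S contribute w(i,j) \<nu>(i), so
1 = (\<Delta>\<nu>)(i) \<le> \<kappa>(i) \<nu>(i) \<le> max \<kappa> \<cdot> \<nu>(i).\<close>

lemma (in vector_space) linear_inj_on_span_imp_span_subset_image:
  assumes fin: "finite E" and "Vector_Spaces.linear scale scale f"
    and into: "f ` span E \<subseteq> span E" and inj: "inj_on f (span E)"
  shows "span E \<subseteq> f ` span E"
proof
  interpret f: Vector_Spaces.linear scale scale f by fact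
  obtain B where B: "B \<subseteq> span E" "independent B" "span E \<subseteq> span B"
    using maximal_independent_subset by blast
  have span_B: "span B = span E"
    using B by (metis span_mono span_span subset_antisym)
  have fin_B: "finite B"
    using independent_span_bound[OF fin B(2)] B(1) by auto
  have inj_B: "inj_on f B"
    using inj_on_subset[OF inj B(1)] .
  have indep_fB: "independent (f ` B)"
    using f.independent_injective_image[OF B(2)] inj span_B by auto
  have span_fB: "span (f ` B) = f ` span E"
    using f.span_image span_B by simp
  fix v assume v: "v \<in> span E"
  show "v \<in> f ` span E"
  proof (rule ccontr)
    assume "v \<notin> f ` span E"
    then have v_new: "v \<notin> span (f ` B)" "v \<notin> f ` B"
      using span_fB B(1) by auto
    then have "independent (insert v (f ` B))"
      using indep_fB independent_insertI by blast
    moreover have "insert v (f ` B) \<subseteq> span B"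
      using v into span_B B(1) by auto
    ultimately have "card (insert v (f ` B)) \<le> card B"
      using independent_span_bound[OF fin_B] by simp
    then show False
      using v_new(2) fin_B card_image[OF inj_B] by simp
  qed
qed

interpretation fun_vs: vector_space "\<lambda>(c::real) (f::'a \<Rightarrow> real) x. c * f x"
  by unfold_locales (auto simp: fun_eq_iff algebra_simps)

lemma sum_fun_apply: "(\<Sum>s\<in>A. g s) x = (\<Sum>s\<in>A. g s x :: 'b::comm_monoid_add)"
  by (induction A rule: infinite_finite_induct) auto

lemma fun_vs_span_deltas:
  fixes S :: "'a set"
  assumes "finite S"
  shows "fun_vs.span ((\<lambda>s x. if x = s then 1 else 0) ` S) = {u. \<forall>x. x \<notin> S \<longrightarrow> u x = 0}"
    (is "fun_vs.span ?E = ?V")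
proof
  have "fun_vs.subspace ?V"
    by (auto simp: fun_vs.subspace_def)
  then show "fun_vs.span ?E \<subseteq> ?V"
    by (rule fun_vs.span_minimal[rotated]) auto
  show "?V \<subseteq> fun_vs.span ?E"
  proof
    fix u assume u: "u \<in> ?V"
    have "u = (\<Sum>s\<in>S. (\<lambda>x. u s * (if x = s then 1 else 0)))"
    proof
      fix x
      have "(\<Sum>s\<in>S. u s * (if x = s then 1 else 0)) = (\<Sum>s\<in>S. if s = x then u x else 0)"
        by (rule sum.cong) auto
      also have "\<dots> = u x"
        using u assms by simp
      finally show "u x = (\<Sum>s\<in>S. (\<lambda>x. u s * (if x = s then 1 else 0))) x"
        by (simp add: sum_fun_apply)
    qed
    also have "\<dots> \<in> fun_vs.span ?E"
      by (intro fun_vs.span_sum fun_vs.span_scale fun_vs.span_base) auto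
    finally show "u \<in> fun_vs.span ?E" .
  qed
qed

lemma degree_pos:
  assumes G: "in_graph_class n w" and i: "i \<in> verts n"
  shows "degree n w i > 0"
proof -
  have "n \<ge> 2" using G by (simp add: in_graph_class_def)
  define j where "j = (if i = 1 then 2 else (1::nat))"
  have j: "j \<in> verts n" "j \<noteq> i"
    using \<open>n \<ge> 2\<close> i by (auto simp: j_def verts_def)
  have "(\<lambda>a b. a \<in> verts n \<and> b \<in> verts n \<and> w a b > 0)\<^sup>*\<^sup>* i j"
    using G i j by (simp add: in_graph_class_def)
  then obtain k where k: "k \<in> verts n" "w i k > 0"
    using j(2) by (cases rule: converse_rtranclpE) auto
  have "\<forall>j\<in>verts n. w i j \<ge> 0"
    using G i by (simp add: in_graph_class_def)
  then have "w i k \<le> degree n w i"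
    unfolding degree_def by (intro member_le_sum) (use k in \<open>auto simp: verts_def\<close>)
  with k show ?thesis by simp
qed

lemma graph_laplacian_add:
  "graph_laplacian n w r (u + v) i = graph_laplacian n w r u i + graph_laplacian n w r v i"
proof -
  have "(\<Sum>j\<in>verts n. w i j * ((u + v) i - (u + v) j))
      = (\<Sum>j\<in>verts n. w i j * (u i - u j)) + (\<Sum>j\<in>verts n. w i j * (v i - v j))"
    by (subst sum.distrib[symmetric]) (rule sum.cong; simp add: algebra_simps)
  then show ?thesis
    by (simp add: graph_laplacian_def distrib_left)
qed

lemma graph_laplacian_diff:
  "graph_laplacian n w r (u - v) i = graph_laplacian n w r u i - graph_laplacian n w r v i"
  using graph_laplacian_add[of n w r "u - v" v i] by simp

lemma graph_laplacian_scale: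
  "graph_laplacian n w r (\<lambda>x. c * u x) i = c * graph_laplacian n w r u i"
  by (simp add: graph_laplacian_def algebra_simps sum_distrib_left)

lemma dirichlet_energy_identity:
  fixes u :: "'a \<Rightarrow> real"
  assumes sym: "\<forall>i\<in>A. \<forall>j\<in>A. w i j = w j i"
  shows "2 * (\<Sum>i\<in>A. u i * (\<Sum>j\<in>A. w i j * (u i - u j)))
       = (\<Sum>i\<in>A. \<Sum>j\<in>A. w i j * (u i - u j)^2)"
proof -
  define X where "X = (\<Sum>i\<in>A. \<Sum>j\<in>A. w i j * (u i * (u i - u j)))"
  have X: "(\<Sum>i\<in>A. u i * (\<Sum>j\<in>A. w i j * (u i - u j))) = X"
    unfolding X_def by (simp add: sum_distrib_left algebra_simps)
  have "X = (\<Sum>j\<in>A. \<Sum>i\<in>A. w i j * (u i * (u i - u j)))"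
    unfolding X_def by (rule sum.swap)
  also have "\<dots> = (\<Sum>i\<in>A. \<Sum>j\<in>A. w i j * (u j * (u j - u i)))"
    using sym by (intro sum.cong refl) auto
  finally have "2 * X = X + (\<Sum>i\<in>A. \<Sum>j\<in>A. w i j * (u j * (u j - u i)))"
    by simp
  also have "\<dots> = (\<Sum>i\<in>A. \<Sum>j\<in>A. w i j * (u i - u j)^2)"
    unfolding X_def sum.distrib[symmetric]
    by (intro sum.cong refl) (simp add: algebra_simps power2_eq_square)
  finally show ?thesis
    using X by simp
qed

lemma dirichlet_energy_zero_imp_eq:
  fixes u :: "'a \<Rightarrow> real"
  assumes fin: "finite A" and sym: "\<forall>i\<in>A. \<forall>j\<in>A. w i j = w j i"
    and nonneg: "\<forall>i\<in>A. \<forall>j\<in>A. w i j \<ge> 0"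
    and zero: "(\<Sum>i\<in>A. u i * (\<Sum>j\<in>A. w i j * (u i - u j))) = 0"
    and i: "i \<in> A" and j: "j \<in> A" and edge: "w i j > 0"
  shows "u i = u j"
proof -
  have energy: "(\<Sum>i\<in>A. \<Sum>j\<in>A. w i j * (u i - u j)^2) = 0"
    using dirichlet_energy_identity[OF sym, of u] zero by simp
  have "\<forall>i\<in>A. (\<Sum>j\<in>A. w i j * (u i - u j)^2) \<ge> 0"
    using nonneg by (auto intro: sum_nonneg)
  then have "(\<Sum>j\<in>A. w i j * (u i - u j)^2) = 0"
    using sum_nonneg_eq_0_iff[OF fin, of "\<lambda>i. \<Sum>j\<in>A. w i j * (u i - u j)^2"] energy i
    by simp
  then have "w i j * (u i - u j)^2 = 0"
    using sum_nonneg_eq_0_iff[OF fin, of "\<lambda>j. w i j * (u i - u j)^2"] nonneg i j by auto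
  with edge show ?thesis by simp
qed

lemma graph_laplacian_dirichlet_unique:
  fixes u :: "nat \<Rightarrow> real"
  assumes G: "in_graph_class n w" and SV: "S \<subset> verts n"
    and outside: "\<forall>i. i \<notin> S \<longrightarrow> u i = 0"
    and harmonic: "\<forall>i\<in>S. graph_laplacian n w r u i = 0"
  shows "u = 0"
proof -
  have sym: "\<forall>i\<in>verts n. \<forall>j\<in>verts n. w i j = w j i"
    and nonneg: "\<forall>i\<in>verts n. \<forall>j\<in>verts n. w i j \<ge> 0"
    and connected: "\<forall>i\<in>verts n. \<forall>j\<in>verts n.
        (\<lambda>a b. a \<in> verts n \<and> b \<in> verts n \<and> w a b > 0)\<^sup>*\<^sup>* i j"
    using G by (auto simp: in_graph_class_def)
  have zero: "(\<Sum>i\<in>verts n. u i * (\<Sum>j\<in>verts n. w i j * (u i - u j))) = 0"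
  proof (intro sum.neutral ballI)
    fix i assume i: "i \<in> verts n"
    show "u i * (\<Sum>j\<in>verts n. w i j * (u i - u j)) = 0"
    proof (cases "i \<in> S")
      case True
      have "degree n w i powr (-r) > 0"
        using degree_pos[OF G i] by simp
      then show ?thesis
        using harmonic[rule_format, OF True] by (simp add: graph_laplacian_def)
    qed (use outside in simp)
  qed
  have along_paths: "u i = u j"
    if "(\<lambda>a b. a \<in> verts n \<and> b \<in> verts n \<and> w a b > 0)\<^sup>*\<^sup>* i j" for i j
    using that
  proof (induction rule: rtranclp_induct)
    case (step y z)
    then show ?case
      using dirichlet_energy_zero_imp_eq[OF _ sym nonneg zero, of y z] by (simp add: verts_def)
  qed simp
  obtain k where k: "k \<in> verts n" "k \<notin> S"
    using SV by blast
  have "u i = 0" if "i \<in> verts n" for i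
    using along_paths[of i k] connected that k outside by simp
  then show ?thesis
    using SV outside by (auto simp: fun_eq_iff)
qed

lemma graph_laplacian_dirichlet_solvable:
  fixes g :: "nat \<Rightarrow> real"
  assumes G: "in_graph_class n w" and SV: "S \<subset> verts n"
  shows "\<exists>u. (\<forall>i\<in>S. graph_laplacian n w r u i = g i) \<and> (\<forall>i. i \<notin> S \<longrightarrow> u i = 0)"
proof -
  have "finite S"
    using SV finite_subset by (auto simp: verts_def)
  define E where "E = (\<lambda>s x. if x = s then 1 else 0::real) ` S"
  have span_E: "fun_vs.span E = {u. \<forall>i. i \<notin> S \<longrightarrow> u i = 0}"
    unfolding E_def using fun_vs_span_deltas[OF \<open>finite S\<close>] .
  define F where "F = (\<lambda>u i. if i \<in> S then graph_laplacian n w r u i else 0)"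
  have linear: "Vector_Spaces.linear (\<lambda>c f x. c * f x) (\<lambda>c f x. c * f x) F"
    unfolding Vector_Spaces.linear_iff using fun_vs.vector_space_axioms
    by (auto simp: F_def fun_eq_iff graph_laplacian_add graph_laplacian_scale)
  have into: "F ` fun_vs.span E \<subseteq> fun_vs.span E"
    unfolding span_E by (auto simp: F_def)
  have inj: "inj_on F (fun_vs.span E)"
  proof (rule inj_onI)
    fix x y assume x: "x \<in> fun_vs.span E" and y: "y \<in> fun_vs.span E" and eq: "F x = F y"
    have "graph_laplacian n w r x i = graph_laplacian n w r y i" if "i \<in> S" for i
      using fun_cong[OF eq, of i] that by (simp add: F_def)
    with x y have "x - y = 0"
      by (intro graph_laplacian_dirichlet_unique[OF G SV, where r = r])
        (auto simp: span_E graph_laplacian_diff)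
    then show "x = y" by simp
  qed
  have "(\<lambda>i. if i \<in> S then g i else 0) \<in> fun_vs.span E"
    unfolding span_E by simp
  then obtain u where "u \<in> fun_vs.span E" "(\<lambda>i. if i \<in> S then g i else 0) = F u"
    using fun_vs.linear_inj_on_span_imp_span_subset_image[OF _ linear into inj] E_def
      \<open>finite S\<close> by blast
  then show ?thesis
    by (intro exI[of _ u]) (auto simp: span_E F_def fun_eq_iff split: if_splits)
qed

lemma
  assumes G: "in_graph_class n w" and SV: "S \<subset> verts n"
  shows equilibrium_measure_laplacian:
      "\<forall>i\<in>S. graph_laplacian n w r (equilibrium_measure n w r S) i = 1"
    and equilibrium_measure_outside:
      "\<forall>i. i \<notin> S \<longrightarrow> equilibrium_measure n w r S i = 0"
proof -
  let ?P = "\<lambda>\<nu>. (\<forall>i\<in>S. graph_laplacian n w r \<nu> i = 1) \<and> (\<forall>i. i \<notin> S \<longrightarrow> \<nu> i = 0)"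
  have "\<exists>!\<nu>. ?P \<nu>"
  proof (rule ex_ex1I)
    show "\<exists>\<nu>. ?P \<nu>"
      using graph_laplacian_dirichlet_solvable[OF G SV] .
    fix x y assume "?P x" "?P y"
    then have "x - y = 0"
      by (intro graph_laplacian_dirichlet_unique[OF G SV, where r = r]) (auto simp: graph_laplacian_diff)
    then show "x = y" by simp
  qed
  then have "?P (equilibrium_measure n w r S)"
    unfolding equilibrium_measure_def by (rule theI')
  then show "\<forall>i\<in>S. graph_laplacian n w r (equilibrium_measure n w r S) i = 1"
    and "\<forall>i. i \<notin> S \<longrightarrow> equilibrium_measure n w r S i = 0"
    by auto
qed

lemma graph_curvature_nonneg:
  assumes "i \<in> S" and "\<forall>j\<in>verts n. w i j \<ge> 0"
  shows "graph_curvature n w r S i \<ge> 0"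
  using assms by (auto simp: graph_curvature_def intro!: mult_nonneg_nonneg sum_nonneg)

lemma one_le_graph_curvature_mult_at_min:
  fixes \<nu> :: "nat \<Rightarrow> real"
  assumes nonneg: "\<forall>j\<in>verts n. w i j \<ge> 0"
    and outside: "\<forall>j. j \<notin> S \<longrightarrow> \<nu> j = 0"
    and i: "i \<in> S" and min: "\<forall>j\<in>S. \<nu> i \<le> \<nu> j"
    and lap: "graph_laplacian n w r \<nu> i = 1"
  shows "1 \<le> graph_curvature n w r S i * \<nu> i"
proof -
  have "(\<Sum>j\<in>verts n. w i j * (\<nu> i - \<nu> j))
      \<le> (\<Sum>j\<in>verts n. if j \<in> S then 0 else w i j * \<nu> i)"
  proof (rule sum_mono)
    fix j assume "j \<in> verts n"
    then show "w i j * (\<nu> i - \<nu> j) \<le> (if j \<in> S then 0 else w i j * \<nu> i)"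
      using nonneg min outside by (auto intro: mult_nonneg_nonpos)
  qed
  also have "\<dots> = (\<Sum>j\<in>verts n - S. w i j) * \<nu> i"
    by (simp add: sum.If_cases sum_distrib_right Diff_eq verts_def)
  finally have "degree n w i powr (-r) * (\<Sum>j\<in>verts n. w i j * (\<nu> i - \<nu> j))
      \<le> degree n w i powr (-r) * ((\<Sum>j\<in>verts n - S. w i j) * \<nu> i)"
    by (rule mult_left_mono) simp
  then show ?thesis
    using lap i by (simp add: graph_laplacian_def graph_curvature_def mult.assoc)
qed

lemma inverse_le_of_one_le_mult:
  fixes a b x :: real
  assumes one: "1 \<le> a * x" and "0 \<le> a" and "a \<le> b"
  shows "inverse b \<le> x"
proof -
  have "0 < a * x"
    using one by simp
  then have "0 < a" "0 < x"
    using \<open>0 \<le> a\<close> by (auto simp: zero_less_mult_iff)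
  have "a * x \<le> b * x"
    using \<open>a \<le> b\<close> \<open>0 < x\<close> by (simp add: mult_right_mono)
  then have "1 \<le> b * x"
    using one by linarith
  then show ?thesis
    using \<open>0 < a\<close> \<open>a \<le> b\<close> by (simp add: inverse_eq_divide divide_le_eq mult.commute)
qed

theorem lemma3p8:
  fixes n :: nat and w :: "nat \<Rightarrow> nat \<Rightarrow> real" and r :: real and S :: "nat set"
  assumes "in_graph_class n w"
    and "0 \<le> r" and "r \<le> 1"
    and "S \<subset> verts n"
  shows "\<forall>i\<in>S. equilibrium_measure n w r S i \<ge> inverse (curvature_max n w r S)"
proof
  fix l assume l: "l \<in> S"
  note G = assms(1) and SV = assms(4)
  define \<nu> where "\<nu> = equilibrium_measure n w r S"
  define i where "i = arg_min_on \<nu> S"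
  have "finite S" "S \<noteq> {}"
    using SV l finite_subset by (auto simp: verts_def)
  then have i: "i \<in> S" "\<forall>j\<in>S. \<nu> i \<le> \<nu> j"
    unfolding i_def by (auto intro: arg_min_if_finite(1) arg_min_least)
  have nonneg: "\<forall>j\<in>verts n. w i j \<ge> 0"
    using G i SV by (auto simp: in_graph_class_def)
  define \<kappa> where "\<kappa> = graph_curvature n w r S i"
  have one: "1 \<le> \<kappa> * \<nu> i"
    unfolding \<kappa>_def using i nonneg equilibrium_measure_laplacian[OF G SV]
      equilibrium_measure_outside[OF G SV]
    by (intro one_le_graph_curvature_mult_at_min) (auto simp: \<nu>_def)
  have "0 \<le> \<kappa>"
    unfolding \<kappa>_def using graph_curvature_nonneg i nonneg by blast
  moreover have "\<kappa> \<le> curvature_max n w r S"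
    unfolding curvature_max_def \<kappa>_def using i SV by (intro Max_ge) (auto simp: verts_def)
  ultimately have "inverse (curvature_max n w r S) \<le> \<nu> i"
    by (rule inverse_le_of_one_le_mult[OF one])
  also have "\<nu> i \<le> \<nu> l"
    using i l by blast
  finally show "inverse (curvature_max n w r S) \<le> equilibrium_measure n w r S l"
    unfolding \<nu>_def .
qed

end
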